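(* Let $n\ge1$, let $M_1,\dots,M_n\ge0$ be integers, let $\sigma,\tau$ be permutations of $\{1,\dots,n\}$, and let $a,b,c,d,q$ be generic. For integers $0\le k_i\le M_i$ and $0\le l\le M_1+\dots+M_n$, $$R^l_{k_1+\dots+k_n}(a,b,c,d;M_1+\dots+M_n;q)=\sum_{\substack{m_1+\dots+m_n=l\\0\le m_i\le M_i}}\prod_{i=1}^n R_{k_i}^{m_i}\big(aq^{|k|_i^\sigma},\,bq^{|M-k|_i^\tau},\,cq^{|m|_i^{\mathrm{id}}},\,dq^{|M-m|_i^{\mathrm{id}}};M_i;q\big).$$
   Context: For a multi-index $v=(v_1,\dots,v_n)$ and a permutation $\sigma$, $|v|_i^\sigma=\sum_{\{j:\,\sigma(j)<\sigma(i)\}}v_j$ (so $|v|_i^{\mathrm{id}}=v_1+\dots+v_{i-1}$); $M-k$ denotes $(M_1-k_1,\dots,M_n-k_n)$. $h_k(x;a)=\prod_{j=0}^{k-1}(1-axq^j+a^2q^{2j})$, and for generic parameters $R_k^l(a,b,c,d;N;q)$ are the unique coefficients with $h_k(x;a)h_{N-k}(x;b)=\sum_{l=0}^N R_k^l(a,b,c,d;N;q)h_l(x;c)h_{N-l}(x;d)$. *)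

theory Defs
  imports "HOL-Computational_Algebra.Polynomial" "HOL-Combinatorics.Permutations"
begin

definition hpoly :: "complex \<Rightarrow> complex \<Rightarrow> nat \<Rightarrow> complex poly" where
  "hpoly q a k = (\<Prod>j<k. [:1 + a^2 * q^(2*j), - a * q^j:])"

text \<open>The family h_l(x;c) h_{N-l}(x;d), l = 0..N, is linearly independent
  (then it is a basis of polynomials of degree at most N and the coefficients R exist
  and are unique).\<close>
definition basis_indep :: "complex \<Rightarrow> complex \<Rightarrow> complex \<Rightarrow> nat \<Rightarrow> bool" where
  "basis_indep q c d N \<longleftrightarrow>
     (\<forall>f :: nat \<Rightarrow> complex.
        (\<Sum>l\<le>N. smult (f l) (hpoly q c l * hpoly q d (N - l))) = 0 \<longrightarrow> (\<forall>l\<le>N. f l = 0))"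

definition Rcoef :: "nat \<Rightarrow> nat \<Rightarrow> complex \<Rightarrow> complex \<Rightarrow> complex \<Rightarrow> complex \<Rightarrow> nat \<Rightarrow> complex \<Rightarrow> complex" where
  "Rcoef k l a b c d N q =
     (THE f :: nat \<Rightarrow> complex. (\<forall>j>N. f j = 0) \<and>
        hpoly q a k * hpoly q b (N - k) =
          (\<Sum>j\<le>N. smult (f j) (hpoly q c j * hpoly q d (N - j)))) l"

text \<open>|v|_i^sigma = sum of v_j over j with sigma j < sigma i (indices 0..n-1).\<close>
definition wsum :: "nat \<Rightarrow> (nat \<Rightarrow> nat) \<Rightarrow> (nat \<Rightarrow> nat) \<Rightarrow> nat \<Rightarrow> nat" where
  "wsum n \<sigma> v i = (\<Sum>j\<in>{j. j < n \<and> \<sigma> j < \<sigma> i}. v j)"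

text \<open>Genericity of (c,d,q) relevant for all coefficient families occurring up to size Ntot:
  all families with parameters c q^s, d q^t are independent.\<close>
definition generic_cdq :: "complex \<Rightarrow> complex \<Rightarrow> complex \<Rightarrow> nat \<Rightarrow> bool" where
  "generic_cdq q c d Ntot \<longleftrightarrow>
     (\<forall>N\<le>Ntot. \<forall>s t :: nat. basis_indep q (c * q^s) (d * q^t) N)"

end

theory Submission
  imports Defs
begin

(* The splitting rule h_{k+k'}(x;a) = h_k(x;a) h_{k'}(x;a q^k), applied along the order given by
   sigma (resp. tau), factors h_K(x;a) h_{N-K}(x;b) into the product over i of
   h_{k_i}(x; a q^{|k|_i^sigma}) h_{M_i-k_i}(x; b q^{|M-k|_i^tau}).  Expand the i-th factor in the
   basis h_j(x; c q^s) h_{M_i-j}(x; d q^t), where s and t are the partial sums of the indices m_1, ...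
   and M_1 - m_1, ... chosen for the earlier factors; then the same splitting rule collapses every
   product of basis elements to h_{|m|}(x;c) h_{N-|m|}(x;d).  Collecting terms with |m| = l and
   comparing coefficients, which is legitimate because genericity makes the basis independent,
   gives the formula. *)

context vector_space
begin

lemma span_subset_span_if_independent_card:
  assumes "independent B" and "B \<subseteq> span W" and "finite W" and "card W \<le> card B"
  shows "span W \<subseteq> span B"
proof (rule span_minimal[OF _ subspace_span], rule subsetI, rule ccontr)
  fix x assume "x \<in> W" and x: "x \<notin> span B"
  then have "independent (insert x B)" and "insert x B \<subseteq> span W"
    using assms independent_insertI span_base by blast+
  then have "finite B" and "card (insert x B) \<le> card W"
    using independent_span_bound[OF \<open>finite W\<close>] assms(1,2) by auto
  moreover have "x \<notin> B" using x span_base by blast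
  ultimately show False using assms(4) by simp
qed

lemma inj_on_if_indexed_independent:
  assumes "finite I" and indep: "\<And>f. (\<Sum>i\<in>I. scale (f i) (g i)) = 0 \<Longrightarrow> \<forall>i\<in>I. f i = 0"
  shows "inj_on g I"
proof (rule inj_onI, rule ccontr)
  fix i j assume ij: "i \<in> I" "j \<in> I" "g i = g j" "i \<noteq> j"
  define f where "f x = (if x = i then 1 else if x = j then -1 else (0::'a))" for x
  have "(\<Sum>x\<in>I. scale (f x) (g x)) = (\<Sum>x\<in>{i, j}. scale (f x) (g x))"
    using ij \<open>finite I\<close> by (intro sum.mono_neutral_right) (auto simp: f_def)
  also have "\<dots> = 0" using ij by (simp add: f_def)
  finally show False using indep ij by (force simp: f_def)
qed

lemma independent_image_if_indexed_independent:
  assumes "finite I" and indep: "\<And>f. (\<Sum>i\<in>I. scale (f i) (g i)) = 0 \<Longrightarrow> \<forall>i\<in>I. f i = 0"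
  shows "independent (g ` I)"
proof (rule independent_if_scalars_zero)
  fix f x assume "(\<Sum>x\<in>g ` I. scale (f x) x) = 0" and "x \<in> g ` I"
  then show "f x = 0"
    using indep[of "f \<circ> g"] by (auto simp: sum.reindex[OF inj_on_if_indexed_independent[OF assms]])
qed (use \<open>finite I\<close> in simp)

end

interpretation poly_vs: vector_space "smult :: 'a::field \<Rightarrow> 'a poly \<Rightarrow> 'a poly"
  by unfold_locales (simp_all add: smult_add_right smult_add_left)

lemma poly_in_span_monoms:
  fixes p :: "'a::field poly"
  assumes "degree p \<le> N"
  shows "p \<in> poly_vs.span ((\<lambda>j. monom 1 j) ` {..N})"
proof -
  have "p = (\<Sum>j\<le>N. smult (coeff p j) (monom 1 j))"
    using poly_as_sum_of_monoms'[OF assms] by (simp add: smult_monom)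
  also have "\<dots> \<in> poly_vs.span ((\<lambda>j. monom 1 j) ` {..N})"
    by (intro poly_vs.span_sum poly_vs.span_scale poly_vs.span_base) auto
  finally show ?thesis .
qed

lemma hpoly_0 [simp]: "hpoly q a 0 = 1"
  by (simp add: hpoly_def)

lemma hpoly_Suc: "hpoly q a (Suc k) = hpoly q a k * [:1 + a\<^sup>2 * q^(2 * k), - a * q^k:]"
  by (simp add: hpoly_def)

lemma hpoly_add: "hpoly q a (k + k') = hpoly q a k * hpoly q (a * q^k) k'"
proof (induction k')
  case 0
  then show ?case by simp
next
  case (Suc k')
  have "(a * q^k)\<^sup>2 * q^(2 * k') = a\<^sup>2 * q^(2 * (k + k'))" and "- (a * q^k) * q^k' = - a * q^(k + k')"
    by (simp_all add: power_add power_mult_distrib power_mult[symmetric] algebra_simps)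
  then show ?case by (simp only: add_Suc_right hpoly_Suc Suc.IH mult.assoc)
qed

lemma hpoly_sum: "hpoly q a (\<Sum>i<(n::nat). k i) = (\<Prod>i<n. hpoly q (a * q^(\<Sum>j<i. k j)) (k i))"
  by (induction n) (simp_all add: hpoly_add)

lemma degree_hpoly: "degree (hpoly q a k) \<le> k"
proof -
  have "degree (hpoly q a k) \<le> (\<Sum>j<k. degree [:1 + a^2 * q^(2*j), - a * q^j:])"
    unfolding hpoly_def by (rule order.trans[OF degree_prod_sum_le]) simp_all
  also have "\<dots> \<le> (\<Sum>j<k. 1)" by (intro sum_mono) auto
  finally show ?thesis by simp
qed

lemma degree_hpoly_mult:
  assumes "j \<le> N"
  shows "degree (hpoly q c j * hpoly q d (N - j)) \<le> N"
proof -
  have "degree (hpoly q c j * hpoly q d (N - j)) \<le> j + (N - j)"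
    by (rule order.trans[OF degree_mult_le add_mono[OF degree_hpoly degree_hpoly]])
  with assms show ?thesis by simp
qed

lemma wsum_permutes_reindex:
  assumes "\<sigma> permutes {..<n}" and "p < n"
  shows "wsum n \<sigma> k (inv \<sigma> p) = (\<Sum>j<p. k (inv \<sigma> j))"
proof -
  have inv_perm: "inv \<sigma> permutes {..<n}" using permutes_inv[OF assms(1)] .
  have "{j. j < n \<and> \<sigma> j < \<sigma> (inv \<sigma> p)} = inv \<sigma> ` {..<p}"
  proof (intro set_eqI iffI)
    fix j assume "j \<in> {j. j < n \<and> \<sigma> j < \<sigma> (inv \<sigma> p)}"
    then show "j \<in> inv \<sigma> ` {..<p}"
      using permutes_inverses[OF assms(1)] by (intro image_eqI[of _ _ "\<sigma> j"]) auto
  next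
    fix j assume "j \<in> inv \<sigma> ` {..<p}"
    then show "j \<in> {j. j < n \<and> \<sigma> j < \<sigma> (inv \<sigma> p)}"
      using permutes_inverses[OF assms(1)] permutes_in_image[OF inv_perm] assms(2) by auto
  qed
  then show ?thesis
    unfolding wsum_def by (simp add: sum.reindex inj_on_subset[OF permutes_inj[OF inv_perm]])
qed

lemma hpoly_sum_permuted:
  assumes "\<sigma> permutes {..<n}"
  shows "hpoly q a (\<Sum>i<n. k i) = (\<Prod>i<n. hpoly q (a * q^wsum n \<sigma> k i) (k i))"
proof -
  have bij: "bij_betw (inv \<sigma>) {..<n} {..<n}"
    using permutes_imp_bij[OF permutes_inv[OF assms]] .
  have "hpoly q a (\<Sum>i<n. k i) = hpoly q a (\<Sum>p<n. k (inv \<sigma> p))"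
    using sum.reindex_bij_betw[OF bij] by metis
  also have "\<dots> = (\<Prod>p<n. hpoly q (a * q^(\<Sum>j<p. k (inv \<sigma> j))) (k (inv \<sigma> p)))"
    by (rule hpoly_sum)
  also have "\<dots> = (\<Prod>p<n. hpoly q (a * q^wsum n \<sigma> k (inv \<sigma> p)) (k (inv \<sigma> p)))"
    by (intro prod.cong) (simp_all add: wsum_permutes_reindex[OF assms])
  also have "\<dots> = (\<Prod>i<n. hpoly q (a * q^wsum n \<sigma> k i) (k i))"
    by (rule prod.reindex_bij_betw[OF bij])
  finally show ?thesis .
qed

lemma wsum_id: "i < n \<Longrightarrow> wsum n id m i = (\<Sum>j<i. m j)"
  unfolding wsum_def by (intro sum.cong) auto

lemma basis_indep_expansion_exists:
  assumes indep: "basis_indep q c d N" and "degree p \<le> N"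
  shows "\<exists>f. p = (\<Sum>l\<le>N. smult (f l) (hpoly q c l * hpoly q d (N - l)))"
proof -
  define g where "g l = hpoly q c l * hpoly q d (N - l)" for l
  define W where "W = (\<lambda>j. monom (1::complex) j) ` {..N}"
  have g_indep: "\<forall>l\<in>{..N}. f l = 0" if "(\<Sum>l\<in>{..N}. smult (f l) (g l)) = 0" for f
    using indep that unfolding basis_indep_def g_def by auto
  note g_inj = poly_vs.inj_on_if_indexed_independent[OF finite_atMost g_indep]
  have "g ` {..N} \<subseteq> poly_vs.span W"
    unfolding W_def g_def using degree_hpoly_mult by (auto intro: poly_in_span_monoms)
  moreover have "card W = card (g ` {..N})"
    unfolding W_def using g_inj by (simp add: card_image inj_on_def monom_eq_iff')
  ultimately have "poly_vs.span W \<subseteq> poly_vs.span (g ` {..N})"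
    using poly_vs.independent_image_if_indexed_independent[OF finite_atMost g_indep]
    by (intro poly_vs.span_subset_span_if_independent_card) (auto simp: W_def)
  with poly_in_span_monoms[OF assms(2)] have "p \<in> poly_vs.span (g ` {..N})"
    unfolding W_def by auto
  then obtain u where "p = (\<Sum>v\<in>g ` {..N}. smult (u v) v)"
    using poly_vs.span_finite[of "g ` {..N}"] by auto
  then have p_eq: "p = (\<Sum>l\<le>N. smult (u (g l)) (g l))"
    by (simp add: sum.reindex[OF g_inj])
  show ?thesis
    by (rule exI[of _ "\<lambda>l. u (g l)"]) (simp add: p_eq g_def)
qed

lemma basis_indep_coeffs_unique:
  assumes indep: "basis_indep q c d N" and "l \<le> N"
    and eq: "(\<Sum>j\<le>N. smult (f j) (hpoly q c j * hpoly q d (N - j))) =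
             (\<Sum>j\<le>N. smult (g j) (hpoly q c j * hpoly q d (N - j)))"
  shows "f l = g l"
proof -
  have "(\<Sum>j\<le>N. smult (f j - g j) (hpoly q c j * hpoly q d (N - j))) = 0"
    using eq by (simp add: smult_diff_left sum_subtractf)
  with indep \<open>l \<le> N\<close> show ?thesis
    unfolding basis_indep_def by (elim allE[of _ "\<lambda>j. f j - g j"]) auto
qed

lemma Rcoef_expansion:
  assumes indep: "basis_indep q c d N" and "k \<le> N"
  shows "hpoly q a k * hpoly q b (N - k) =
     (\<Sum>j\<le>N. smult (Rcoef k j a b c d N q) (hpoly q c j * hpoly q d (N - j)))"
proof -
  define P where "P f \<longleftrightarrow> (\<forall>j>N. f j = 0) \<and> hpoly q a k * hpoly q b (N - k) =
          (\<Sum>j\<le>N. smult (f j) (hpoly q c j * hpoly q d (N - j)))" for f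
  have "degree (hpoly q a k * hpoly q b (N - k)) \<le> N"
    using degree_hpoly_mult \<open>k \<le> N\<close> .
  then obtain f where f: "hpoly q a k * hpoly q b (N - k) =
          (\<Sum>j\<le>N. smult (f j) (hpoly q c j * hpoly q d (N - j)))"
    using basis_indep_expansion_exists[OF indep] by blast
  define f' where "f' j = (if j \<le> N then f j else 0)" for j
  have "P f'" using f unfolding P_def f'_def by (auto intro!: sum.cong)
  moreover have "g = f'" if "P g" for g
  proof
    fix j show "g j = f' j"
      using basis_indep_coeffs_unique[OF indep, of j g f'] that \<open>P f'\<close>
      by (cases "j \<le> N") (auto simp: P_def)
  qed
  ultimately have "P (THE f. P f)" by (rule theI)
  then show ?thesis unfolding Rcoef_def P_def by blast
qed

lemma Rcoef_eqI:
  assumes "basis_indep q c d N" and "k \<le> N" and "l \<le> N"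
    and "hpoly q a k * hpoly q b (N - k) =
          (\<Sum>j\<le>N. smult (f j) (hpoly q c j * hpoly q d (N - j)))"
  shows "Rcoef k l a b c d N q = f l"
  using basis_indep_coeffs_unique[OF assms(1,3), of "\<lambda>j. Rcoef k j a b c d N q" f]
    Rcoef_expansion[OF assms(1,2), of a b] assms(4)
  by simp

definition box :: "nat \<Rightarrow> (nat \<Rightarrow> nat) \<Rightarrow> (nat \<Rightarrow> nat) set" where
  "box n M = {m. (\<forall>i<n. m i \<le> M i) \<and> (\<forall>i\<ge>n. m i = 0)}"

lemma box_0: "box 0 M = {\<lambda>_. 0}"
  unfolding box_def by auto

lemma bij_betw_box_Suc:
  "bij_betw (\<lambda>(m, j). m(n := j)) (box n M \<times> {..M n}) (box (Suc n) M)"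
proof (rule bij_betw_byWitness[where f' = "\<lambda>m. (m(n := 0), m n)"])
  show "(\<lambda>(m, j). m(n := j)) ` (box n M \<times> {..M n}) \<subseteq> box (Suc n) M"
    by (auto simp: box_def less_Suc_eq)
  show "(\<lambda>m. (m(n := 0), m n)) ` box (Suc n) M \<subseteq> box n M \<times> {..M n}"
    by (auto simp: box_def)
qed (auto simp: box_def fun_eq_iff)

lemma finite_box: "finite (box n M)"
  by (induction n) (simp_all add: box_0 bij_betw_finite[OF bij_betw_box_Suc, symmetric])

lemma sum_lessThan_fun_upd:
  "i \<le> (n::nat) \<Longrightarrow> (\<Sum>x<i. f x ((m(n := j)) x)) = (\<Sum>x<i. f x (m x))"
  by (intro sum.cong) auto

lemma smult_hpoly_mult_expansion:
  assumes "P = (\<Sum>j\<le>K. smult (r j) (hpoly q (c * q^s) j * hpoly q (d * q^t) (K - j)))"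
  shows "smult w (hpoly q c s * hpoly q d t) * P =
    (\<Sum>j\<le>K. smult (w * r j) (hpoly q c (s + j) * hpoly q d (t + (K - j))))"
proof -
  have "smult w (hpoly q c s * hpoly q d t) * P = (\<Sum>j\<le>K. smult w (hpoly q c s * hpoly q d t) *
      smult (r j) (hpoly q (c * q^s) j * hpoly q (d * q^t) (K - j)))"
    by (simp add: assms sum_distrib_left)
  also have "\<dots> = (\<Sum>j\<le>K. smult (w * r j) (hpoly q c (s + j) * hpoly q d (t + (K - j))))"
    unfolding hpoly_add by (simp only: mult_smult_left mult_smult_right smult_smult ac_simps)
  finally show ?thesis .
qed

lemma prod_hpoly_expansions:
  fixes P :: "nat \<Rightarrow> complex poly" and r :: "nat \<Rightarrow> nat \<Rightarrow> nat \<Rightarrow> nat \<Rightarrow> complex"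
  assumes "\<And>i s t. i < n \<Longrightarrow>
    P i = (\<Sum>j\<le>M i. smult (r i j s t) (hpoly q (c * q^s) j * hpoly q (d * q^t) (M i - j)))"
  shows "(\<Prod>i<n. P i) = (\<Sum>m\<in>box n M.
    smult (\<Prod>i<n. r i (m i) (\<Sum>j<i. m j) (\<Sum>j<i. M j - m j))
      (hpoly q c (\<Sum>i<n. m i) * hpoly q d (\<Sum>i<n. M i - m i)))"
  using assms
proof (induction n)
  case 0
  then show ?case by (simp add: box_0)
next
  case (Suc n)
  define W where "W m = (\<Prod>i<n. r i (m i) (\<Sum>j<i. m j) (\<Sum>j<i. M j - m j))" for m
  let ?F = "\<lambda>m. smult (\<Prod>i<Suc n. r i (m i) (\<Sum>j<i. m j) (\<Sum>j<i. M j - m j))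
      (hpoly q c (\<Sum>i<Suc n. m i) * hpoly q d (\<Sum>i<Suc n. M i - m i))"
  have F_upd: "?F (m(n := j)) = smult (W m * r n j (\<Sum>i<n. m i) (\<Sum>i<n. M i - m i))
      (hpoly q c ((\<Sum>i<n. m i) + j) * hpoly q d ((\<Sum>i<n. M i - m i) + (M n - j)))" for m j
    by (simp add: W_def sum_lessThan_fun_upd)
  have "(\<Prod>i<Suc n. P i) = (\<Sum>m\<in>box n M. smult (W m)
      (hpoly q c (\<Sum>i<n. m i) * hpoly q d (\<Sum>i<n. M i - m i)) * P n)"
    using Suc by (simp add: W_def sum_distrib_right)
  also have "\<dots> = (\<Sum>m\<in>box n M. \<Sum>j\<le>M n. ?F (m(n := j)))"
    unfolding F_upd
    by (rule sum.cong[OF refl], rule smult_hpoly_mult_expansion, rule Suc.prems) simp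
  also have "\<dots> = (\<Sum>(m, j)\<in>box n M \<times> {..M n}. ?F (m(n := j)))"
    by (rule sum.cartesian_product)
  also have "\<dots> = (\<Sum>x\<in>box n M \<times> {..M n}. ?F ((\<lambda>(m, j). m(n := j)) x))"
    by (rule sum.cong) auto
  also have "\<dots> = (\<Sum>m\<in>box (Suc n) M. ?F m)"
    by (rule sum.reindex_bij_betw[OF bij_betw_box_Suc])
  finally show ?case .
qed

lemma hpoly_split_expansion:
  assumes "\<sigma> permutes {..<n}" and "\<tau> permutes {..<n}" and k_le: "\<forall>i<n. k i \<le> M i"
    and indep: "\<And>i s t. i < n \<Longrightarrow> basis_indep q (c * q^s) (d * q^t) (M i)"
  shows "hpoly q a (\<Sum>i<n. k i) * hpoly q b ((\<Sum>i<n. M i) - (\<Sum>i<n. k i)) =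
    (\<Sum>m\<in>box n M. smult
      (\<Prod>i<n. Rcoef (k i) (m i) (a * q ^ wsum n \<sigma> k i) (b * q ^ wsum n \<tau> (\<lambda>j. M j - k j) i)
                 (c * q ^ wsum n id m i) (d * q ^ wsum n id (\<lambda>j. M j - m j) i) (M i) q)
      (hpoly q c (\<Sum>i<n. m i) * hpoly q d ((\<Sum>i<n. M i) - (\<Sum>i<n. m i))))"
proof -
  define \<alpha> where "\<alpha> i = a * q ^ wsum n \<sigma> k i" for i
  define \<beta> where "\<beta> i = b * q ^ wsum n \<tau> (\<lambda>j. M j - k j) i" for i
  have "(\<Sum>i<n. M i) - (\<Sum>i<n. k i) = (\<Sum>i<n. M i - k i)"
    using k_le by (intro sum_subtractf_nat[symmetric]) auto
  then have "hpoly q a (\<Sum>i<n. k i) * hpoly q b ((\<Sum>i<n. M i) - (\<Sum>i<n. k i)) =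
      (\<Prod>i<n. hpoly q (\<alpha> i) (k i) * hpoly q (\<beta> i) (M i - k i))"
    unfolding \<alpha>_def \<beta>_def
    by (simp add: prod.distrib hpoly_sum_permuted[OF assms(1), of q a k]
        hpoly_sum_permuted[OF assms(2), of q b "\<lambda>j. M j - k j"])
  also have "\<dots> = (\<Sum>m\<in>box n M. smult
      (\<Prod>i<n. Rcoef (k i) (m i) (\<alpha> i) (\<beta> i) (c * q^(\<Sum>j<i. m j)) (d * q^(\<Sum>j<i. M j - m j)) (M i) q)
      (hpoly q c (\<Sum>i<n. m i) * hpoly q d (\<Sum>i<n. M i - m i)))"
    using k_le indep by (intro prod_hpoly_expansions) (simp add: Rcoef_expansion)
  also have "\<dots> = (\<Sum>m\<in>box n M. smult
      (\<Prod>i<n. Rcoef (k i) (m i) (\<alpha> i) (\<beta> i)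
                 (c * q ^ wsum n id m i) (d * q ^ wsum n id (\<lambda>j. M j - m j) i) (M i) q)
      (hpoly q c (\<Sum>i<n. m i) * hpoly q d ((\<Sum>i<n. M i) - (\<Sum>i<n. m i))))"
    (is "sum ?f _ = sum ?g _")
  proof (rule sum.cong[OF refl])
    fix m assume "m \<in> box n M"
    then have "(\<Sum>i<n. M i - m i) = (\<Sum>i<n. M i) - (\<Sum>i<n. m i)"
      by (intro sum_subtractf_nat) (auto simp: box_def)
    then show "?f m = ?g m" by (simp add: wsum_id)
  qed
  finally show ?thesis unfolding \<alpha>_def \<beta>_def .
qed

lemma sum_box_group_by_total:
  "(\<Sum>m\<in>box n M. smult (w m) (g (\<Sum>i<n. m i))) =
    (\<Sum>l\<le>(\<Sum>i<n. M i). smult (\<Sum>m\<in>{m \<in> box n M. (\<Sum>i<n. m i) = l}. w m) (g l))"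
proof -
  have "(\<Sum>m\<in>box n M. smult (w m) (g (\<Sum>i<n. m i))) =
      (\<Sum>l\<le>(\<Sum>i<n. M i). \<Sum>m\<in>{m \<in> box n M. (\<Sum>i<n. m i) = l}. smult (w m) (g (\<Sum>i<n. m i)))"
    by (rule sum.group[symmetric]) (use finite_box in \<open>auto simp: box_def intro!: sum_mono\<close>)
  then show ?thesis by (simp add: smult_sum)
qed

theorem mainTheorem9:
  fixes n :: nat and M k :: "nat \<Rightarrow> nat" and \<sigma> \<tau> :: "nat \<Rightarrow> nat"
    and a b c d q :: complex and l :: nat
  assumes "n \<ge> 1"
    and "\<sigma> permutes {..<n}" and "\<tau> permutes {..<n}"
    and "generic_cdq q c d (\<Sum>i<n. M i)"
    and "\<forall>i<n. k i \<le> M i"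
    and "l \<le> (\<Sum>i<n. M i)"
  shows "Rcoef (\<Sum>i<n. k i) l a b c d (\<Sum>i<n. M i) q =
    (\<Sum>m\<in>{m :: nat \<Rightarrow> nat. (\<forall>i<n. m i \<le> M i) \<and> (\<forall>i\<ge>n. m i = 0) \<and> (\<Sum>i<n. m i) = l}.
       \<Prod>i<n. Rcoef (k i) (m i)
                (a * q ^ wsum n \<sigma> k i)
                (b * q ^ wsum n \<tau> (\<lambda>j. M j - k j) i)
                (c * q ^ wsum n id m i)
                (d * q ^ wsum n id (\<lambda>j. M j - m j) i)
                (M i) q)"
  (is "_ = (\<Sum>m\<in>?S l. ?P m)")
proof -
  let ?N = "\<Sum>i<n. M i" and ?K = "\<Sum>i<n. k i"
  have indep: "basis_indep q (c * q^s) (d * q^t) N'" if "N' \<le> ?N" for s t N'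
    using assms(4) that unfolding generic_cdq_def by blast
  have "M i \<le> ?N" if "i < n" for i
    using that by (intro member_le_sum) auto
  then have "hpoly q a ?K * hpoly q b (?N - ?K) =
      (\<Sum>j\<le>?N. smult (sum ?P {m \<in> box n M. (\<Sum>i<n. m i) = j}) (hpoly q c j * hpoly q d (?N - j)))"
    using hpoly_split_expansion[OF assms(2,3,5) indep, of a b]
      sum_box_group_by_total[where g = "\<lambda>j. hpoly q c j * hpoly q d (?N - j)"] by simp
  moreover have "?K \<le> ?N"
    using assms(5) by (intro sum_mono) auto
  moreover have "{m \<in> box n M. (\<Sum>i<n. m i) = l} = ?S l"
    by (auto simp: box_def)
  ultimately show ?thesis
    using Rcoef_eqI[OF indep[of ?N 0 0]] assms(6) by simp
qed

end
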